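(* Let $r$ be a positive integer and let $G$ be a graph containing the $r$-grid $W_r$ as a minor, witnessed by branch sets $V_h\subseteq V(G)$, $h\in V(W_r)$. Let $\mathcal{T}'$ be the natural tangle of $W_r$ and let $\mathcal{T}$ be its extension to $G$. Then for every separation $(A,B)\in\mathcal{T}$ of order $s$, the set $A$ meets at most $s^2$ of the branch sets $V_h$.
   Context: For a positive integer $r$, the $r$-grid $W_r$ has vertex set $\{(i,j):1\le i,j\le r\}$, with $(i,j)$ adjacent to $(i',j')$ iff $|i-i'|+|j-j'|=1$. Its $j$th column is $\{1,\dots,r\}\times\{j\}$, its $i$th row is $\{i\}\times\{1,\dots,r\}$, and the union of a row and a column is a cross. A separation of a graph is a pair $(A,B)$ of vertex sets whose union is the whole vertex set such that no edge joins $A\setminus B$ to $B\setminus A$; its order is $|A\cap B|$. The natural tangle $\mathcal{T}'$ of $W_r$ is the set of all separations $(A',B')$ of $W_r$ of order less than $r$ such that $B'$ contains a cross. That $W_r$ is a minor of $G$ witnessed by branch sets $V_h$ means the $V_h$ ($h\in V(W_r)$) are pairwise disjoint vertex sets of $G$, each inducing a connected subgraph, and $G$ has an edge between $V_h$ and $V_{h'}$ whenever $hh'$ is an edge of $W_r$. For a separation $(A,B)$ of $G$, the induced separation of $W_r$ is $(A',B'):=(\{h: V_h\cap A\neq\emptyset\},\{h:V_h\cap B\ne\emptyset\})$. The extension $\mathcal{T}$ of $\mathcal{T}'$ to $G$ is the set of all separations $(A,B)$ of $G$ of order less than $r$ whose induced separation $(A',B')$ lies in $\mathcal{T}'$. 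*)

theory Defs
  imports Main
begin

definition graph :: "'a set \<Rightarrow> ('a \<Rightarrow> 'a \<Rightarrow> bool) \<Rightarrow> bool" where
  "graph V E \<longleftrightarrow> (\<forall>x y. E x y \<longrightarrow> x \<in> V \<and> y \<in> V \<and> E y x \<and> x \<noteq> y)"

definition connected_set :: "('a \<Rightarrow> 'a \<Rightarrow> bool) \<Rightarrow> 'a set \<Rightarrow> bool" where
  "connected_set E X \<longleftrightarrow> X \<noteq> {} \<and>
     (\<forall>x\<in>X. \<forall>y\<in>X. (\<lambda>u v. u \<in> X \<and> v \<in> X \<and> E u v)\<^sup>*\<^sup>* x y)"

definition separation :: "'a set \<Rightarrow> ('a \<Rightarrow> 'a \<Rightarrow> bool) \<Rightarrow> 'a set \<Rightarrow> 'a set \<Rightarrow> bool" where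
  "separation V E A B \<longleftrightarrow> A \<union> B = V \<and>
     (\<forall>x\<in>A - B. \<forall>y\<in>B - A. \<not> E x y)"

definition order_less :: "'a set \<Rightarrow> 'a set \<Rightarrow> nat \<Rightarrow> bool" where
  "order_less A B r \<longleftrightarrow> finite (A \<inter> B) \<and> card (A \<inter> B) < r"

definition grid_V :: "nat \<Rightarrow> (nat \<times> nat) set" where
  "grid_V r = {1..r} \<times> {1..r}"

definition grid_E :: "nat \<Rightarrow> nat \<times> nat \<Rightarrow> nat \<times> nat \<Rightarrow> bool" where
  "grid_E r h h' \<longleftrightarrow> h \<in> grid_V r \<and> h' \<in> grid_V r \<and>
     \<bar>int (fst h) - int (fst h')\<bar> + \<bar>int (snd h) - int (snd h')\<bar> = 1"

definition grid_row :: "nat \<Rightarrow> nat \<Rightarrow> (nat \<times> nat) set" where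
  "grid_row r i = {i} \<times> {1..r}"

definition grid_column :: "nat \<Rightarrow> nat \<Rightarrow> (nat \<times> nat) set" where
  "grid_column r j = {1..r} \<times> {j}"

definition grid_cross :: "nat \<Rightarrow> (nat \<times> nat) set \<Rightarrow> bool" where
  "grid_cross r C \<longleftrightarrow> (\<exists>i\<in>{1..r}. \<exists>j\<in>{1..r}. C = grid_row r i \<union> grid_column r j)"

definition natural_tangle :: "nat \<Rightarrow> ((nat \<times> nat) set \<times> (nat \<times> nat) set) set" where
  "natural_tangle r = {(A', B'). separation (grid_V r) (grid_E r) A' B' \<and> order_less A' B' r \<and>
     (\<exists>C. grid_cross r C \<and> C \<subseteq> B')}"

definition grid_minor_model ::
  "'a set \<Rightarrow> ('a \<Rightarrow> 'a \<Rightarrow> bool) \<Rightarrow> nat \<Rightarrow> (nat \<times> nat \<Rightarrow> 'a set) \<Rightarrow> bool" where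
  "grid_minor_model V E r Vb \<longleftrightarrow>
     (\<forall>h\<in>grid_V r. Vb h \<subseteq> V \<and> connected_set E (Vb h)) \<and>
     (\<forall>h\<in>grid_V r. \<forall>h'\<in>grid_V r. h \<noteq> h' \<longrightarrow> Vb h \<inter> Vb h' = {}) \<and>
     (\<forall>h h'. grid_E r h h' \<longrightarrow> (\<exists>x\<in>Vb h. \<exists>y\<in>Vb h'. E x y))"

definition induced_sep ::
  "nat \<Rightarrow> (nat \<times> nat \<Rightarrow> 'a set) \<Rightarrow> 'a set \<Rightarrow> 'a set \<Rightarrow> (nat \<times> nat) set \<times> (nat \<times> nat) set" where
  "induced_sep r Vb A B = ({h\<in>grid_V r. Vb h \<inter> A \<noteq> {}}, {h\<in>grid_V r. Vb h \<inter> B \<noteq> {}})"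

definition tangle_extension ::
  "'a set \<Rightarrow> ('a \<Rightarrow> 'a \<Rightarrow> bool) \<Rightarrow> nat \<Rightarrow> (nat \<times> nat \<Rightarrow> 'a set) \<Rightarrow> ('a set \<times> 'a set) set" where
  "tangle_extension V E r Vb = {(A, B). separation V E A B \<and> order_less A B r \<and>
     induced_sep r Vb A B \<in> natural_tangle r}"

end

theory Submission
  imports Defs "HOL-Library.Disjoint_Sets"
begin

text \<open>Let (A',B') be the separation of the grid induced by (A,B). Rows and columns of the
  grid are connected, so any of them meeting both A' and B' meets A' \<inter> B'. For h \<in> A', its row
  and its column meet A' at h and meet the cross contained in B'; hence h lies in the product
  of the row and column projections of A' \<inter> B', and |A'| \<le> |A' \<inter> B'|^2. The same argument
  applied to the connected branch sets shows that each one indexed by A' \<inter> B' meets A \<inter> B;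
  being disjoint, they give |A' \<inter> B'| \<le> |A \<inter> B|.\<close>

lemma connected_set_meets_separator:
  assumes sep: "separation V E A B" and conn: "connected_set E X" and "X \<subseteq> V"
    and "X \<inter> A \<noteq> {}" and "X \<inter> B \<noteq> {}"
  shows "X \<inter> (A \<inter> B) \<noteq> {}"
proof
  assume disj: "X \<inter> (A \<inter> B) = {}"
  let ?R = "\<lambda>u v. u \<in> X \<and> v \<in> X \<and> E u v"
  obtain x where x: "x \<in> X" "x \<in> A" using \<open>X \<inter> A \<noteq> {}\<close> by blast
  obtain y where y: "y \<in> X" "y \<in> B" using \<open>X \<inter> B \<noteq> {}\<close> by blast
  have "z \<in> A - B" if "?R\<^sup>*\<^sup>* x z" for z
    using that
  proof (induction rule: rtranclp_induct)
    case base
    then show ?case using x disj by auto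
  next
    case (step u v)
    then show ?case using \<open>X \<subseteq> V\<close> sep disj unfolding separation_def by blast
  qed
  moreover have "?R\<^sup>*\<^sup>* x y" using conn x y unfolding connected_set_def by blast
  ultimately show False using y by auto
qed

lemma rtranclp_consecutive:
  assumes step: "\<And>m. lo \<le> m \<Longrightarrow> m < hi \<Longrightarrow> R (f m) (f (Suc m))"
    and "lo \<le> a" "a \<le> b" "b \<le> hi"
  shows "R\<^sup>*\<^sup>* (f a) (f b)"
  using \<open>a \<le> b\<close> \<open>b \<le> hi\<close>
proof (induction b rule: dec_induct)
  case (step n)
  then show ?case using assms(1)[of n] \<open>lo \<le> a\<close> by (simp add: rtranclp.rtrancl_into_rtrancl)
qed simp

lemma connected_set_consecutive:
  assumes "symp E" "lo \<le> hi"
    and step: "\<And>m. lo \<le> m \<Longrightarrow> m < hi \<Longrightarrow> E (f m) (f (Suc m))"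
  shows "connected_set E (f ` {lo..hi})"
proof -
  let ?X = "f ` {lo..hi}"
  let ?R = "\<lambda>u v. u \<in> ?X \<and> v \<in> ?X \<and> E u v"
  have "symp ?R" using \<open>symp E\<close> by (auto simp: symp_def)
  have forward: "?R\<^sup>*\<^sup>* (f a) (f b)" if "lo \<le> a" "a \<le> b" "b \<le> hi" for a b
    by (rule rtranclp_consecutive[where lo = lo and hi = hi]) (use step that in auto)
  have "?R\<^sup>*\<^sup>* (f a) (f b)" if "a \<in> {lo..hi}" "b \<in> {lo..hi}" for a b
  proof (cases "a \<le> b")
    case False
    then have "?R\<^sup>*\<^sup>* (f b) (f a)" using forward that by simp
    then show ?thesis using sympD[OF symp_rtranclp[OF \<open>symp ?R\<close>]] by blast
  qed (use forward that in auto)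
  then show ?thesis using \<open>lo \<le> hi\<close> unfolding connected_set_def by auto
qed

lemma symp_grid_E: "symp (grid_E r)"
  unfolding symp_def grid_E_def by (simp add: abs_minus_commute)

lemma connected_set_grid_row:
  assumes "i \<in> {1..r}"
  shows "connected_set (grid_E r) (grid_row r i)"
proof -
  have "grid_row r i = (\<lambda>j. (i, j)) ` {1..r}" unfolding grid_row_def by auto
  moreover have "connected_set (grid_E r) ((\<lambda>j. (i, j)) ` {1..r})"
    by (rule connected_set_consecutive[OF symp_grid_E])
       (use assms in \<open>auto simp: grid_E_def grid_V_def\<close>)
  ultimately show ?thesis by simp
qed

lemma connected_set_grid_column:
  assumes "j \<in> {1..r}"
  shows "connected_set (grid_E r) (grid_column r j)"
proof -
  have "grid_column r j = (\<lambda>i. (i, j)) ` {1..r}" unfolding grid_column_def by auto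
  moreover have "connected_set (grid_E r) ((\<lambda>i. (i, j)) ` {1..r})"
    by (rule connected_set_consecutive[OF symp_grid_E])
       (use assms in \<open>auto simp: grid_E_def grid_V_def\<close>)
  ultimately show ?thesis by simp
qed

lemma natural_tangle_small_side_subset:
  assumes "(A', B') \<in> natural_tangle r"
  shows "A' \<subseteq> fst ` (A' \<inter> B') \<times> snd ` (A' \<inter> B')"
proof
  fix a assume "a \<in> A'"
  obtain i j where a: "a = (i, j)" by force
  obtain i0 j0 where cross: "i0 \<in> {1..r}" "j0 \<in> {1..r}"
    "grid_row r i0 \<union> grid_column r j0 \<subseteq> B'"
    and sep: "separation (grid_V r) (grid_E r) A' B'"
    using assms unfolding natural_tangle_def grid_cross_def by blast
  have "a \<in> grid_V r" using \<open>a \<in> A'\<close> sep unfolding separation_def by blast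
  then have ij: "i \<in> {1..r}" "j \<in> {1..r}" using a unfolding grid_V_def by auto
  have row: "grid_row r i \<subseteq> grid_V r" and column: "grid_column r j \<subseteq> grid_V r"
    using ij unfolding grid_row_def grid_column_def grid_V_def by auto
  have "(i, j) \<in> grid_row r i \<inter> A'" "(i, j0) \<in> grid_row r i \<inter> B'"
    using \<open>a \<in> A'\<close> a ij cross unfolding grid_row_def grid_column_def by auto
  then have "grid_row r i \<inter> (A' \<inter> B') \<noteq> {}"
    by (intro connected_set_meets_separator[OF sep connected_set_grid_row[OF ij(1)] row]) blast+
  then obtain j' where "(i, j') \<in> A' \<inter> B'" unfolding grid_row_def by auto
  moreover have "(i, j) \<in> grid_column r j \<inter> A'" "(i0, j) \<in> grid_column r j \<inter> B'"
    using \<open>a \<in> A'\<close> a ij cross unfolding grid_row_def grid_column_def by auto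
  then have "grid_column r j \<inter> (A' \<inter> B') \<noteq> {}"
    by (intro connected_set_meets_separator[OF sep connected_set_grid_column[OF ij(2)] column]) blast+
  then obtain i' where "(i', j) \<in> A' \<inter> B'" unfolding grid_column_def by auto
  ultimately show "a \<in> fst ` (A' \<inter> B') \<times> snd ` (A' \<inter> B')"
    using a by (metis SigmaI fst_conv image_eqI snd_conv)
qed

lemma card_fst_snd_product_le:
  assumes "finite S"
  shows "card (fst ` S \<times> snd ` S) \<le> (card S)\<^sup>2"
proof -
  have "card (fst ` S \<times> snd ` S) = card (fst ` S) * card (snd ` S)"
    by (rule card_cartesian_product)
  also have "\<dots> \<le> card S * card S"
    using card_image_le[OF assms, of fst] card_image_le[OF assms, of snd] by (intro mult_mono) auto
  finally show ?thesis by (simp add: power2_eq_square)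
qed

lemma card_le_if_disjoint_family_meets:
  assumes "finite S" and "disjoint_family_on X H" and meets: "\<forall>h\<in>H. X h \<inter> S \<noteq> {}"
  shows "card H \<le> card S"
proof -
  have "\<forall>h\<in>H. \<exists>v. v \<in> X h \<inter> S" using meets by blast
  then obtain f where f: "\<forall>h\<in>H. f h \<in> X h \<inter> S" by (metis bchoice)
  have "inj_on f H"
  proof (rule inj_onI)
    fix h h' assume "h \<in> H" "h' \<in> H" "f h = f h'"
    then have "f h \<in> X h \<inter> X h'" using f by auto
    then show "h = h'"
      using \<open>disjoint_family_on X H\<close> \<open>h \<in> H\<close> \<open>h' \<in> H\<close> unfolding disjoint_family_on_def by blast
  qed
  then show ?thesis using card_inj_on_le[of f H S] f \<open>finite S\<close> by blast
qed

lemma grid_minor_model_card_meets_both_le: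
  assumes model: "grid_minor_model V E r Vb" and sep: "separation V E A B" and "finite (A \<inter> B)"
  shows "card {h \<in> grid_V r. Vb h \<inter> A \<noteq> {} \<and> Vb h \<inter> B \<noteq> {}} \<le> card (A \<inter> B)"
proof (rule card_le_if_disjoint_family_meets[OF \<open>finite (A \<inter> B)\<close>])
  have "disjoint_family_on Vb (grid_V r)"
    using model unfolding grid_minor_model_def disjoint_family_on_def by blast
  then show "disjoint_family_on Vb {h \<in> grid_V r. Vb h \<inter> A \<noteq> {} \<and> Vb h \<inter> B \<noteq> {}}"
    by (rule disjoint_family_on_mono[rotated]) auto
  show "\<forall>h\<in>{h \<in> grid_V r. Vb h \<inter> A \<noteq> {} \<and> Vb h \<inter> B \<noteq> {}}. Vb h \<inter> (A \<inter> B) \<noteq> {}"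
  proof
    fix h assume h: "h \<in> {h \<in> grid_V r. Vb h \<inter> A \<noteq> {} \<and> Vb h \<inter> B \<noteq> {}}"
    then have "connected_set E (Vb h)" "Vb h \<subseteq> V"
      using model unfolding grid_minor_model_def by auto
    moreover have "Vb h \<inter> A \<noteq> {}" "Vb h \<inter> B \<noteq> {}" using h by auto
    ultimately show "Vb h \<inter> (A \<inter> B) \<noteq> {}" by (rule connected_set_meets_separator[OF sep])
  qed
qed

theorem corollary5:
  fixes V :: "'a set" and E :: "'a \<Rightarrow> 'a \<Rightarrow> bool" and r :: nat
    and Vb :: "nat \<times> nat \<Rightarrow> 'a set" and A B :: "'a set"
  assumes "r \<ge> 1"
    and "graph V E"
    and "grid_minor_model V E r Vb"
    and "(A, B) \<in> tangle_extension V E r Vb"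
  shows "card {h \<in> grid_V r. Vb h \<inter> A \<noteq> {}} \<le> (card (A \<inter> B))\<^sup>2"
proof -
  define A' where "A' = {h \<in> grid_V r. Vb h \<inter> A \<noteq> {}}"
  define B' where "B' = {h \<in> grid_V r. Vb h \<inter> B \<noteq> {}}"
  have sep: "separation V E A B" and "finite (A \<inter> B)" and "(A', B') \<in> natural_tangle r"
    using assms(4) unfolding tangle_extension_def induced_sep_def order_less_def A'_def B'_def
    by simp_all
  have "finite (A' \<inter> B')" unfolding A'_def grid_V_def by auto
  have "card A' \<le> card (fst ` (A' \<inter> B') \<times> snd ` (A' \<inter> B'))"
    using natural_tangle_small_side_subset[OF \<open>(A', B') \<in> natural_tangle r\<close>] \<open>finite (A' \<inter> B')\<close>
    by (intro card_mono) auto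
  also have "\<dots> \<le> (card (A' \<inter> B'))\<^sup>2"
    using card_fst_snd_product_le[OF \<open>finite (A' \<inter> B')\<close>] .
  finally have "card A' \<le> (card (A' \<inter> B'))\<^sup>2" .
  moreover have "A' \<inter> B' = {h \<in> grid_V r. Vb h \<inter> A \<noteq> {} \<and> Vb h \<inter> B \<noteq> {}}"
    unfolding A'_def B'_def by auto
  then have "card (A' \<inter> B') \<le> card (A \<inter> B)"
    using grid_minor_model_card_meets_both_le[OF assms(3) sep \<open>finite (A \<inter> B)\<close>] by simp
  ultimately show ?thesis unfolding A'_def by (meson le_trans power_mono zero_le)
qed

end
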